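(* Let $\tau$ be a point of the upper half plane, and let $Q_1,Q_2\in M_2(\mathbb Z)$ be symmetric positive definite matrices of determinant $N$. Put $H_i=(\operatorname{Im}(Q_i\tau))^{-1}$ and $\mathscr R_i=\{M\in\operatorname{End}(X_{Q_i\tau}):{}^t\bar MH_i=H_iM^\iota\}$ for $i=1,2$. Let $S=\mathbb Z$ or $\mathbb Q$ and suppose there is $A\in GL_2(S)$ with $Q_2=(\det A)^{-1}AQ_1\,{}^tA$. Then $M\mapsto AMA^{-1}$ is an $S$-algebra isomorphism $\operatorname{End}_S(X_{Q_1\tau})\to\operatorname{End}_S(X_{Q_2\tau})$, and it induces an $S$-algebra isomorphism $\mathscr R_1\otimes_{\mathbb Z}S\to\mathscr R_2\otimes_{\mathbb Z}S$.
   Context: For $z$ in the Siegel upper half space $\mathfrak h_2=\{z\in M_2(\mathbb C):{}^tz=z,\operatorname{Im}z>0\}$: $L_z=[z,\mathbf 1_2]\mathbb Z^4\subset\mathbb C^2$, $X_z=\mathbb C^2/L_z$; $\operatorname{End}(X_z)=\operatorname{End}_{\mathbb Z}(X_z)$ is identified with the ring of $M\in M_2(\mathbb C)$ with $ML_z\subseteq L_z$, and $\operatorname{End}_{\mathbb Q}(X_z)=\operatorname{End}(X_z)\otimes\mathbb Q$. For a $2\times2$ matrix $M$, $M^\iota=\operatorname{tr}(M)\mathbf 1_2-M$ and $\bar M$ is entrywise complex conjugation. $N$ is a prime. *)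

theory Defs
  imports "HOL-Analysis.Analysis" "HOL-Computational_Algebra.Primes"
begin

datatype coeff_ring = SZ | SQ

definition int_cmat :: "int^2^2 \<Rightarrow> complex^2^2" where
  "int_cmat Q = (\<chi> i j. of_int (Q$i$j))"

definition int_rmat :: "int^2^2 \<Rightarrow> real^2^2" where
  "int_rmat Q = (\<chi> i j. of_int (Q$i$j))"

definition rat_cmat :: "rat^2^2 \<Rightarrow> complex^2^2" where
  "rat_cmat A = (\<chi> i j. of_rat (A$i$j))"

definition int_ratmat :: "int^2^2 \<Rightarrow> rat^2^2" where
  "int_ratmat Q = (\<chi> i j. of_int (Q$i$j))"

definition int_cvec :: "int^2 \<Rightarrow> complex^2" where
  "int_cvec a = (\<chi> i. of_int (a$i))"

definition mat_scal :: "int^2^2 \<Rightarrow> complex \<Rightarrow> complex^2^2" where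
  "mat_scal Q \<tau> = (\<chi> i j. \<tau> * of_int (Q$i$j))"

definition sym_pos_def :: "int^2^2 \<Rightarrow> bool" where
  "sym_pos_def Q \<longleftrightarrow> transpose Q = Q \<and>
     (\<forall>x::real^2. x \<noteq> 0 \<longrightarrow> x \<bullet> (int_rmat Q *v x) > 0)"

definition lattice :: "complex^2^2 \<Rightarrow> (complex^2) set" where
  "lattice z = {z *v int_cvec a + int_cvec b | a b. True}"

definition End_Z :: "complex^2^2 \<Rightarrow> (complex^2^2) set" where
  "End_Z z = {M. \<forall>v \<in> lattice z. M *v v \<in> lattice z}"

definition scale_mat :: "complex \<Rightarrow> complex^2^2 \<Rightarrow> complex^2^2" where
  "scale_mat c M = (\<chi> i j. c * M$i$j)"

text \<open>X \<otimes>_Z S, realised inside M_2(C) (X a torsion-free subgroup of M_2(C))\<close>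
definition tensorS :: "coeff_ring \<Rightarrow> (complex^2^2) set \<Rightarrow> (complex^2^2) set" where
  "tensorS S X = (case S of SZ \<Rightarrow> X
     | SQ \<Rightarrow> {M. \<exists>n::nat. n > 0 \<and> scale_mat (of_nat n) M \<in> X})"

definition End_S :: "coeff_ring \<Rightarrow> complex^2^2 \<Rightarrow> (complex^2^2) set" where
  "End_S S z = tensorS S (End_Z z)"

definition Im_mat :: "complex^2^2 \<Rightarrow> real^2^2" where
  "Im_mat z = (\<chi> i j. Im (z$i$j))"

definition Hmat :: "complex^2^2 \<Rightarrow> complex^2^2" where
  "Hmat z = (\<chi> i j. complex_of_real (matrix_inv (Im_mat z) $i$j))"

definition iota :: "complex^2^2 \<Rightarrow> complex^2^2" where
  "iota M = mat (trace M) - M"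

definition cnj_mat :: "complex^2^2 \<Rightarrow> complex^2^2" where
  "cnj_mat M = (\<chi> i j. cnj (M$i$j))"

definition R_ring :: "complex^2^2 \<Rightarrow> (complex^2^2) set" where
  "R_ring z = {M \<in> End_Z z. transpose (cnj_mat M) ** Hmat z = Hmat z ** iota M}"

definition scalars :: "coeff_ring \<Rightarrow> rat set" where
  "scalars S = (case S of SZ \<Rightarrow> \<int> | SQ \<Rightarrow> UNIV)"

definition GL2 :: "coeff_ring \<Rightarrow> (rat^2^2) set" where
  "GL2 S = {A. (\<forall>i j. A$i$j \<in> scalars S) \<and> det A \<noteq> 0 \<and>
               inverse (det A) \<in> scalars S}"

definition S_alg_iso :: "coeff_ring \<Rightarrow> (complex^2^2 \<Rightarrow> complex^2^2)
    \<Rightarrow> (complex^2^2) set \<Rightarrow> (complex^2^2) set \<Rightarrow> bool" where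
  "S_alg_iso S f X Y \<longleftrightarrow> bij_betw f X Y \<and> f (mat 1) = mat 1 \<and>
     (\<forall>x\<in>X. \<forall>y\<in>X. f (x + y) = f x + f y \<and> f (x ** y) = f x ** f y) \<and>
     (\<forall>c\<in>scalars S. \<forall>x\<in>X. f (scale_mat (of_rat c) x) = scale_mat (of_rat c) (f x))"

end

theory Submission imports Defs begin

(* Write F_A(M) = A M A^{-1}.  The hypothesis says that Q2 is the twisted congruence
   (det A)^{-1} A Q1 A^T of Q1.
      From the latter, d A maps the lattice of Q1\<tau> into that of Q2\<tau> whenever d A is
      integral; hence F_A sends End(X_{Q1\<tau>}) into End(X_{Q2\<tau>}) up to a positive integer
      factor (a common denominator of A and A^{-1}, equal to 1 when A \<in> GL_2(Z)).
   3. The condition  t(bar M) H = H M^iota  defining script R is equivalent to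
      Q t(bar M) = M^iota Q, which is preserved by F_A and by integer scaling.
   4. Anything that maps X into Y up to a positive integer factor maps the S-tensors into
      each other; applying this to A and A^{-1} gives mutually inverse maps, and a
      conjugation map with an inverse is automatically an S-algebra isomorphism. *)

lemma mat2_eq:
  "(A::'a^2^2) = B \<longleftrightarrow> A$1$1 = B$1$1 \<and> A$1$2 = B$1$2 \<and> A$2$1 = B$2$1 \<and> A$2$2 = B$2$2"
  by (auto simp: vec_eq_iff forall_2)

lemma mult2_nth [simp]: "((A::'a::semiring_1^2^2) ** B) $ i $ j = A$i$1 * B$1$j + A$i$2 * B$2$j"
  by (simp add: matrix_matrix_mult_def sum_2)

lemma mat2_nth [simp]:
  "(mat c :: 'a::zero^2^2) $1$1 = c" "(mat c :: 'a::zero^2^2) $2$2 = c"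
  "(mat c :: 'a::zero^2^2) $1$2 = 0" "(mat c :: 'a::zero^2^2) $2$1 = 0"
  by (simp_all add: mat_def)

lemma transpose2_nth [simp]: "transpose A $ i $ j = A $ j $ i"
  by (simp add: transpose_def)

lemma mat2_comm: "mat c ** (A::'a::comm_semiring_1^2^2) = A ** mat c"
  by (simp add: mat2_eq algebra_simps)

lemma mat2_mat: "mat a ** (mat b::'a::comm_semiring_1^2^2) = mat (a * b)"
  by (simp add: mat2_eq)

lemma entrywise_scale_eq: "(\<chi> i j. c * (X::'a::comm_semiring_1^2^2)$i$j) = mat c ** X"
  by (simp add: mat2_eq)

lemma scale_mat_eq: "scale_mat c X = mat c ** X"
  by (simp add: scale_mat_def entrywise_scale_eq)

lemma matrix_add_rdistrib2: "((A::'a::semiring_1^2^2) + B) ** (C::'a^2^2) = A ** C + B ** C"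
  by (rule iffD2[OF mat2_eq]) (simp add: algebra_simps)

lemma matrix_diff_distrib2:
  "(A::'a::ring_1^2^2) ** (B - (C::'a^2^2)) = A ** B - A ** C"
  "((A::'a::ring_1^2^2) - B) ** (C::'a^2^2) = A ** C - B ** C"
  by (rule iffD2[OF mat2_eq], simp add: algebra_simps)+

text \<open>The library's matrix_inv is a choice; it is the unique two-sided inverse.\<close>

lemma matrix_inv_unique:
  assumes "(A::'a::semiring_1^'n^'n) ** B = mat 1" "B ** A = mat 1"
  shows "matrix_inv A = B"
proof -
  have inv: "A ** matrix_inv A = mat 1 \<and> matrix_inv A ** A = mat 1"
    unfolding matrix_inv_def by (rule someI[of _ B]) (use assms in auto)
  have "matrix_inv A = matrix_inv A ** (A ** B)" using assms by simp
  also have "\<dots> = B" by (simp only: matrix_mul_assoc inv[THEN conjunct2] matrix_mul_lid)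
  finally show ?thesis .
qed

lemma matrix_inv_mult:
  assumes "det (A::'a::field^'n^'n) \<noteq> 0"
  shows "A ** matrix_inv A = mat 1" "matrix_inv A ** A = mat 1"
proof -
  obtain B where "A ** B = mat 1" "B ** A = mat 1"
    using assms invertible_det_nz unfolding invertible_def by blast
  then show "A ** matrix_inv A = mat 1" "matrix_inv A ** A = mat 1"
    using matrix_inv_unique by metis+
qed

lemma det_matrix_inv:
  assumes "det (A::'a::field^'n^'n) \<noteq> 0"
  shows "det (matrix_inv A) = inverse (det A)"
proof -
  have "det A * det (matrix_inv A) = 1" using matrix_inv_mult(1)[OF assms] by (metis det_I det_mul)
  then show ?thesis using assms by (simp add: field_simps)
qed

lemma det_matrix_inv_nz: "det (A::'a::field^'n^'n) \<noteq> 0 \<Longrightarrow> det (matrix_inv A) \<noteq> 0"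
  using det_matrix_inv by force

lemma matrix_inv_inv: "det (A::'a::field^'n^'n) \<noteq> 0 \<Longrightarrow> matrix_inv (matrix_inv A) = A"
  using matrix_inv_unique matrix_inv_mult by metis

definition adj2 :: "'a::comm_ring_1^2^2 \<Rightarrow> 'a^2^2" where
  "adj2 A = (\<chi> i j. if i = 1 then (if j = 1 then A$2$2 else - A$1$2)
                              else (if j = 1 then - A$2$1 else A$1$1))"

lemma adj2_nth [simp]:
  "adj2 A $1$1 = A$2$2" "adj2 A $1$2 = - A$1$2" "adj2 A $2$1 = - A$2$1" "adj2 A $2$2 = A$1$1"
  by (simp_all add: adj2_def)

lemma matrix_inv_adj2:
  fixes A :: "'a::field^2^2"
  assumes "det A \<noteq> 0"
  shows "matrix_inv A = (\<chi> i j. adj2 A $i$j / det A)"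
proof (rule matrix_inv_unique)
  have D: "det A = A$1$1 * A$2$2 - A$1$2 * A$2$1" by (simp add: det_2)
  show "A ** (\<chi> i j. adj2 A $i$j / det A) = mat 1" "(\<chi> i j. adj2 A $i$j / det A) ** A = mat 1"
    using assms by (simp_all add: mat2_eq divide_simps) (simp_all add: D algebra_simps)
qed

lemma cnj_of_rat [simp]: "cnj (of_rat r) = of_rat r"
  by (cases r) (simp add: of_rat_rat)

lemma rat_cmat_mult: "rat_cmat (A ** B) = rat_cmat A ** rat_cmat B"
  by (simp add: mat2_eq rat_cmat_def of_rat_add of_rat_mult)

lemma rat_cmat_mat: "rat_cmat (mat c) = mat (of_rat c)"
  by (simp add: mat2_eq rat_cmat_def)

lemma rat_cmat_transpose: "rat_cmat (transpose A) = transpose (rat_cmat A)"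
  by (simp add: mat2_eq rat_cmat_def)

lemma cnj_rat_cmat: "cnj_mat (rat_cmat A) = rat_cmat A"
  by (simp add: mat2_eq rat_cmat_def cnj_mat_def)

lemma cnj_mat_mult: "cnj_mat (A ** B) = cnj_mat A ** cnj_mat B"
  by (simp add: mat2_eq cnj_mat_def)

lemma rat_cmat_int_ratmat: "rat_cmat (int_ratmat P) = int_cmat P"
  by (simp add: mat2_eq rat_cmat_def int_ratmat_def int_cmat_def)

lemma rat_cmat_inv:
  assumes "det A \<noteq> 0"
  shows "rat_cmat A ** rat_cmat (matrix_inv A) = mat 1"
    and "rat_cmat (matrix_inv A) ** rat_cmat A = mat 1"
  by (simp_all add: rat_cmat_mult[symmetric] matrix_inv_mult[OF assms] rat_cmat_mat)

definition real_cmat :: "real^2^2 \<Rightarrow> complex^2^2" where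
  "real_cmat X = (\<chi> i j. of_real (X$i$j))"

lemma real_cmat_mult: "real_cmat (A ** B) = real_cmat A ** real_cmat B"
  by (simp add: mat2_eq real_cmat_def)

lemma real_cmat_mat: "real_cmat (mat c) = mat (of_real c)"
  by (simp add: mat2_eq real_cmat_def)

definition twisted_congr :: "'a::field^2^2 \<Rightarrow> 'a^2^2 \<Rightarrow> 'a^2^2" where
  "twisted_congr B P = (\<chi> i j. inverse (det B) * (B ** P ** transpose B)$i$j)"

text \<open>It is undone by the inverse matrix, which makes the situation symmetric.\<close>

lemma twisted_congr_inv:
  fixes B P :: "'a::field^2^2"
  assumes d: "det B \<noteq> 0"
  shows "twisted_congr (matrix_inv B) (twisted_congr B P) = P"
proof -
  let ?Bi = "matrix_inv B" and ?c = "mat (inverse (det B)) :: 'a^2^2"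
  have BiB: "?Bi ** B = mat 1" "transpose B ** transpose ?Bi = mat 1"
    using matrix_inv_mult[OF d] by (simp_all add: matrix_transpose_mul[symmetric])
  have c_comm: "?Bi ** ?c = ?c ** ?Bi" by (rule mat2_comm[symmetric])
  have "?Bi ** twisted_congr B P ** transpose ?Bi = ?Bi ** (?c ** (B ** P ** transpose B)) ** transpose ?Bi"
    unfolding twisted_congr_def entrywise_scale_eq ..
  also have "\<dots> = ?c ** ((?Bi ** B) ** P ** (transpose B ** transpose ?Bi))"
    by (simp only: matrix_mul_assoc c_comm)
  also have "\<dots> = ?c ** P" by (simp add: BiB)
  finally have "?Bi ** twisted_congr B P ** transpose ?Bi = ?c ** P" .
  then show ?thesis
    unfolding twisted_congr_def[of ?Bi] entrywise_scale_eq det_matrix_inv[OF d]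
    using d by (simp add: matrix_mul_assoc mat2_mat)
qed

text \<open>The identity Q adj(B)^T = B P, which shows how B moves the lattice of P\<tau>.\<close>

lemma twisted_congr_adj2:
  fixes B P :: "'a::field^2^2"
  assumes "det B \<noteq> 0"
  shows "twisted_congr B P ** transpose (adj2 B) = B ** P"
proof -
  have D: "det B = B$1$1 * B$2$2 - B$1$2 * B$2$1" by (simp add: det_2)
  show ?thesis
    using assms unfolding twisted_congr_def
    by (simp add: mat2_eq field_simps) (simp_all add: D algebra_simps)
qed

lemma scalars_simps [simp]: "scalars SZ = \<int>" "scalars SQ = UNIV"
  by (simp_all add: scalars_def)

lemma GL2_det: "A \<in> GL2 S \<Longrightarrow> det A \<noteq> 0"
  by (simp add: GL2_def)

text \<open>GL_2(S) is closed under inversion; for S = Z this is the adjugate formula.\<close>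

lemma GL2_inv:
  assumes A: "A \<in> GL2 S"
  shows "matrix_inv A \<in> GL2 S"
proof -
  have d: "det A \<noteq> 0" using GL2_det[OF A] .
  show ?thesis
  proof (cases S)
    case SQ
    then show ?thesis using det_matrix_inv_nz[OF d] by (simp add: GL2_def)
  next
    case SZ
    have ent: "A$i$j \<in> \<int>" for i j using A SZ by (simp add: GL2_def)
    have idet: "inverse (det A) \<in> \<int>" using A SZ by (simp add: GL2_def)
    have "det A \<in> \<int>" using ent by (simp add: det_2)
    moreover have "adj2 A $ i $ j \<in> \<int>" for i j
      using ent exhaust_2[of i] exhaust_2[of j] by auto
    then have "matrix_inv A $ i $ j \<in> \<int>" for i j
      using idet by (simp add: matrix_inv_adj2[OF d] divide_inverse)
    ultimately show ?thesis using SZ det_matrix_inv_nz[OF d] det_matrix_inv[OF d] idet d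
      by (simp add: GL2_def)
  qed
qed

lemma rat_denom: "\<exists>n::nat. n > 0 \<and> of_nat n * (r::rat) \<in> \<int>"
proof -
  obtain a b where q: "quotient_of r = (a, b)" by (cases "quotient_of r")
  have b: "b > 0" using quotient_of_denom_pos[OF q] .
  have "of_nat (nat b) * r = of_int a" using quotient_of_div[OF q] b by simp
  then show ?thesis using b by (intro exI[of _ "nat b"]) simp
qed

lemma GL2_denom:
  assumes A: "A \<in> GL2 S"
  obtains d :: nat where "d > 0" "S = SZ \<Longrightarrow> d = 1" "\<And>i j. of_nat d * A$i$j \<in> \<int>"
proof (cases S)
  case SZ
  then show ?thesis using A that[of 1] by (simp add: GL2_def)
next
  case SQ
  have "\<forall>i j. \<exists>n::nat. n > 0 \<and> of_nat n * A$i$j \<in> \<int>" using rat_denom by blast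
  then obtain n where n: "\<And>i j. n i j > (0::nat)" "\<And>i j. of_nat (n i j) * A$i$j \<in> \<int>"
    by metis
  define d where "d = n 1 1 * n 1 2 * n 2 1 * n 2 2"
  have "of_nat d * A$i$j \<in> \<int>" for i j
  proof -
    have "n i j dvd d"
      using exhaust_2[of i] exhaust_2[of j] by (elim disjE) (simp_all add: d_def)
    then obtain k where "d = k * n i j" by (metis dvd_def mult.commute)
    then have "of_nat d * A$i$j = of_nat k * (of_nat (n i j) * A$i$j)" by simp
    then show ?thesis by (metis Ints_mult Ints_of_nat n(2))
  qed
  moreover have "d > 0" using n(1) by (simp add: d_def)
  ultimately show ?thesis using SQ that by blast
qed

section \<open>Transport of the lattices and of End\<close>

text \<open>If d B is integral, then d B maps L_{P\<tau>} into L_{Q\<tau>}: for v = P\<tau> a + b one has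
  d B v = Q\<tau> (adj(dB)^T a) + (dB) b, by the identity Q adj(B)^T = B P.\<close>

lemma lattice_map:
  fixes B :: "rat^2^2" and P Q :: "int^2^2" and d :: nat
  assumes detB: "det B \<noteq> 0" and dB: "\<And>i j. of_nat d * B$i$j \<in> \<int>"
    and rel: "int_ratmat Q = twisted_congr B (int_ratmat P)"
    and v: "v \<in> lattice (mat_scal P \<tau>)"
  shows "of_nat d *s (rat_cmat B *v v) \<in> lattice (mat_scal Q \<tau>)"
proof -
  obtain a b where v: "v = mat_scal P \<tau> *v int_cvec a + int_cvec b"
    using v by (auto simp: lattice_def)
  have "\<forall>i j. \<exists>z::int. of_int z = of_nat d * B$i$j" using dB by (metis Ints_cases)
  then obtain k where k: "\<And>i j. of_int (k i j) = of_nat d * B$i$j" by metis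
  have kc: "\<And>i j. (of_int (k i j)::complex) = of_nat d * of_rat (B$i$j)"
    by (metis k of_rat_of_int_eq of_rat_mult of_rat_of_nat_eq)
  define K where "K = (\<chi> i j. k i j)"
  have "int_ratmat Q ** transpose (adj2 B) = B ** int_ratmat P"
    unfolding rel by (rule twisted_congr_adj2[OF detB])
  then have "\<And>i l. (of_rat ((int_ratmat Q ** transpose (adj2 B))$i$l)::complex)
                 = of_rat ((B ** int_ratmat P)$i$l)"
    by simp
  then have E: "\<And>i l. of_int (Q$i$1) * of_rat ((transpose (adj2 B))$1$l)
       + of_int (Q$i$2) * of_rat ((transpose (adj2 B))$2$l)
       = of_rat (B$i$1) * of_int (P$1$l) + (of_rat (B$i$2) * of_int (P$2$l)::complex)"
    by (simp add: int_ratmat_def of_rat_add of_rat_mult)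
  have E': "of_int (Q$1$1) * of_rat (B$2$2) - of_int (Q$1$2) * of_rat (B$1$2)
          = of_rat (B$1$1) * of_int (P$1$1) + (of_rat (B$1$2) * of_int (P$2$1)::complex)"
    "- of_int (Q$1$1) * of_rat (B$2$1) + of_int (Q$1$2) * of_rat (B$1$1)
          = of_rat (B$1$1) * of_int (P$1$2) + (of_rat (B$1$2) * of_int (P$2$2)::complex)"
    "of_int (Q$2$1) * of_rat (B$2$2) - of_int (Q$2$2) * of_rat (B$1$2)
          = of_rat (B$2$1) * of_int (P$1$1) + (of_rat (B$2$2) * of_int (P$2$1)::complex)"
    "- of_int (Q$2$1) * of_rat (B$2$1) + of_int (Q$2$2) * of_rat (B$1$1)
          = of_rat (B$2$1) * of_int (P$1$2) + (of_rat (B$2$2) * of_int (P$2$2)::complex)"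
    using E[of 1 1] E[of 1 2] E[of 2 1] E[of 2 2] by (simp_all add: of_rat_minus)
  have "of_nat d *s (rat_cmat B *v v)
      = mat_scal Q \<tau> *v int_cvec (transpose (adj2 K) *v a) + int_cvec (K *v b)"
    unfolding v
    by (simp add: vec_eq_iff forall_2 matrix_vector_mult_def sum_2 vector_scalar_mult_def
        rat_cmat_def mat_scal_def int_cvec_def K_def kc) (use E' in algebra)
  then show ?thesis by (auto simp: lattice_def)
qed

definition conj_map :: "rat^2^2 \<Rightarrow> complex^2^2 \<Rightarrow> complex^2^2" where
  "conj_map B M = rat_cmat B ** M ** rat_cmat (matrix_inv B)"

lemma scale_mat_mult_vec: "scale_mat (of_nat k) X *v v = of_nat k *s (X *v v)"
  by (simp add: vec_eq_iff forall_2 matrix_vector_mult_def sum_2 scale_mat_def algebra_simps)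

text \<open>F_B sends End(X_{P\<tau>}) into End(X_{Q\<tau>}) after scaling by the product of the
  denominators of B and B^{-1}: apply lattice_map to B^{-1}, then M, then B.\<close>

lemma End_Z_conj_map:
  fixes B :: "rat^2^2" and P Q :: "int^2^2"
  assumes dB: "det B \<noteq> 0" and d1: "\<And>i j. of_nat d1 * B$i$j \<in> \<int>"
    and d2: "\<And>i j. of_nat d2 * matrix_inv B$i$j \<in> \<int>"
    and rel: "int_ratmat Q = twisted_congr B (int_ratmat P)"
    and M: "M \<in> End_Z (mat_scal P \<tau>)"
  shows "scale_mat (of_nat (d1 * d2)) (conj_map B M) \<in> End_Z (mat_scal Q \<tau>)"
  unfolding End_Z_def
proof (intro CollectI ballI)
  fix v assume v: "v \<in> lattice (mat_scal Q \<tau>)"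
  have rel_inv: "int_ratmat P = twisted_congr (matrix_inv B) (int_ratmat Q)"
    using twisted_congr_inv[OF dB] rel by simp
  let ?w = "of_nat d2 *s (rat_cmat (matrix_inv B) *v v)"
  have "?w \<in> lattice (mat_scal P \<tau>)"
    by (rule lattice_map[OF det_matrix_inv_nz[OF dB] d2 rel_inv v])
  then have "M *v ?w \<in> lattice (mat_scal P \<tau>)"
    using M by (simp add: End_Z_def)
  then have "of_nat d1 *s (rat_cmat B *v (M *v ?w)) \<in> lattice (mat_scal Q \<tau>)"
    by (rule lattice_map[OF dB d1 rel])
  moreover have "scale_mat (of_nat (d1 * d2)) (conj_map B M) *v v
      = of_nat d1 *s (rat_cmat B *v (M *v ?w))"
    unfolding scale_mat_mult_vec conj_map_def
    by (simp add: vector_scalar_commute matrix_vector_mul_assoc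
        matrix_mul_assoc vector_smult_assoc mult.commute)
  ultimately show "scale_mat (of_nat (d1 * d2)) (conj_map B M) *v v \<in> lattice (mat_scal Q \<tau>)"
    by simp
qed

section \<open>The condition defining script R\<close>

text \<open>Since H^{-1} = Im(P\<tau>) = (Im \<tau>) P, the condition t(bar M) H = H M^iota is equivalent
  to the H-free condition P t(bar M) = M^iota P.\<close>

definition adjoint_cond :: "int^2^2 \<Rightarrow> complex^2^2 \<Rightarrow> bool" where
  "adjoint_cond P M \<longleftrightarrow> int_cmat P ** transpose (cnj_mat M) = iota M ** int_cmat P"

lemma Hmat_cond_iff:
  fixes P :: "int^2^2"
  assumes t: "Im \<tau> > 0" and dP: "det P \<noteq> 0"
  shows "transpose (cnj_mat M) ** Hmat (mat_scal P \<tau>) = Hmat (mat_scal P \<tau>) ** iota M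
         \<longleftrightarrow> adjoint_cond P M"
proof -
  define R where "R = Im_mat (mat_scal P \<tau>)"
  have R: "R = mat (Im \<tau>) ** int_rmat P"
    by (simp add: R_def mat2_eq Im_mat_def mat_scal_def int_rmat_def)
  have "det R = Im \<tau> * Im \<tau> * of_int (det P)"
    by (simp add: R det_2 int_rmat_def algebra_simps)
  then have dR: "det R \<noteq> 0" using t dP by simp
  define H where "H = real_cmat (matrix_inv R)"
  have HR: "H ** real_cmat R = mat 1" "real_cmat R ** H = mat 1"
    unfolding H_def real_cmat_mult[symmetric] matrix_inv_mult[OF dR] real_cmat_mat by simp_all
  have Hm: "Hmat (mat_scal P \<tau>) = H" by (simp add: Hmat_def H_def real_cmat_def R_def)
  have cR: "real_cmat R = mat (of_real (Im \<tau>)) ** int_cmat P"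
    by (simp add: R mat2_eq real_cmat_def int_rmat_def int_cmat_def)
  have swap: "X ** H = H ** Y \<longleftrightarrow> real_cmat R ** X = Y ** real_cmat R" for X Y :: "complex^2^2"
  proof
    assume e: "X ** H = H ** Y"
    have "real_cmat R ** X = real_cmat R ** (X ** H) ** real_cmat R"
      by (simp add: matrix_mul_assoc[symmetric] HR)
    also have "\<dots> = Y ** real_cmat R" by (simp add: e matrix_mul_assoc HR)
    finally show "real_cmat R ** X = Y ** real_cmat R" .
  next
    assume e: "real_cmat R ** X = Y ** real_cmat R"
    have "X ** H = H ** (real_cmat R ** X) ** H" by (simp add: matrix_mul_assoc HR)
    also have "\<dots> = H ** Y" by (simp add: e matrix_mul_assoc[symmetric] HR)
    finally show "X ** H = H ** Y" .
  qed
  have cancel: "mat (of_real (Im \<tau>)) ** X = mat (of_real (Im \<tau>)) ** Y \<longleftrightarrow> X = Y"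
    for X Y :: "complex^2^2"
    using t by (auto simp: mat2_eq)
  have pull: "Y ** (mat (of_real (Im \<tau>)) ** int_cmat P) = mat (of_real (Im \<tau>)) ** (Y ** int_cmat P)"
    for Y :: "complex^2^2"
    by (metis matrix_mul_assoc mat2_comm)
  show ?thesis unfolding Hm swap cR pull adjoint_cond_def
    by (simp only: matrix_mul_assoc[symmetric] cancel)
qed

lemma iota_conj:
  fixes A B M :: "complex^2^2"
  assumes AB: "A ** B = mat 1" "B ** A = mat 1"
  shows "iota (A ** M ** B) = A ** iota M ** B"
proof -
  have tr: "trace (A ** M ** B) = trace M"
    using trace_mul_sym[of "A ** M" B] by (simp add: matrix_mul_assoc AB)
  have "A ** mat (trace M) ** B = mat (trace M)"
    by (metis AB(1) matrix_mul_assoc mat2_comm matrix_mul_lid)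
  then show ?thesis unfolding iota_def tr
    by (simp add: matrix_diff_distrib2)
qed

lemma adjoint_cond_conj_map:
  fixes B :: "rat^2^2" and P Q :: "int^2^2"
  assumes d: "det B \<noteq> 0"
    and rel: "int_ratmat Q = twisted_congr B (int_ratmat P)"
    and h: "adjoint_cond P M"
  shows "adjoint_cond Q (conj_map B M)"
proof -
  let ?A = "rat_cmat B" and ?Bi = "rat_cmat (matrix_inv B)"
    and ?c = "mat (of_rat (inverse (det B))) :: complex^2^2"
  let ?P = "int_cmat P" and ?Mt = "transpose (cnj_mat M)"
  have AB: "?A ** ?Bi = mat 1" "?Bi ** ?A = mat 1" using rat_cmat_inv[OF d] by auto
  have ABt: "transpose ?A ** transpose ?Bi = mat 1"
    by (simp add: matrix_transpose_mul[symmetric] AB)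
  have Qc: "int_cmat Q = ?c ** (?A ** ?P ** transpose ?A)"
    unfolding rat_cmat_int_ratmat[symmetric] rel twisted_congr_def entrywise_scale_eq
    by (simp add: rat_cmat_mult rat_cmat_mat rat_cmat_transpose rat_cmat_int_ratmat)
  have cn: "transpose (cnj_mat (?A ** M ** ?Bi)) = transpose ?Bi ** ?Mt ** transpose ?A"
    by (simp add: cnj_mat_mult cnj_rat_cmat matrix_transpose_mul matrix_mul_assoc)
  have c_central: "X ** ?Bi ** ?c ** ?A = X ** ?c" for X :: "complex^2^2"
  proof -
    have "?Bi ** ?c = ?c ** ?Bi" by (rule mat2_comm[symmetric])
    then have "?Bi ** ?c ** ?A = ?c" by (simp only: matrix_mul_assoc[symmetric] AB matrix_mul_rid)
    then show ?thesis by (simp only: matrix_mul_assoc[symmetric])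
  qed
  have c_comm: "?c ** ?A ** iota M = ?A ** iota M ** ?c"
    by (simp only: matrix_mul_assoc[symmetric] mat2_comm[of _ "?A ** iota M"])
  have "int_cmat Q ** transpose (cnj_mat (?A ** M ** ?Bi))
      = ?c ** ?A ** ?P ** (transpose ?A ** transpose ?Bi) ** ?Mt ** transpose ?A"
    unfolding Qc cn by (simp only: matrix_mul_assoc)
  also have "\<dots> = ?c ** ?A ** (?P ** ?Mt) ** transpose ?A"
    by (simp only: ABt matrix_mul_rid matrix_mul_assoc)
  also have "\<dots> = ?c ** ?A ** (iota M ** ?P) ** transpose ?A"
    using h by (simp only: adjoint_cond_def)
  also have "\<dots> = ?A ** iota M ** (?Bi ** ?c ** ?A) ** ?P ** transpose ?A"
    by (simp only: matrix_mul_assoc c_central c_comm)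
  also have "\<dots> = iota (?A ** M ** ?Bi) ** int_cmat Q"
    unfolding iota_conj[OF AB] Qc by (simp only: matrix_mul_assoc)
  finally show ?thesis unfolding adjoint_cond_def conj_map_def .
qed

text \<open>Both sides of the condition are linear in M, so it survives integer scaling.\<close>

lemma adjoint_cond_scale:
  assumes "adjoint_cond P X"
  shows "adjoint_cond P (scale_mat (of_nat m) X)"
proof -
  have "transpose (cnj_mat (scale_mat (of_nat m) X)) = mat (of_nat m) ** transpose (cnj_mat X)"
    by (simp add: mat2_eq cnj_mat_def scale_mat_def)
  moreover have "iota (scale_mat (of_nat m) X) = mat (of_nat m) ** iota X"
    by (simp add: mat2_eq iota_def scale_mat_def trace_def sum_2 algebra_simps)
  ultimately show ?thesis
    using assms unfolding adjoint_cond_def by (metis matrix_mul_assoc mat2_comm)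
qed

lemma R_ring_conj_map:
  fixes B :: "rat^2^2" and P Q :: "int^2^2"
  assumes t: "Im \<tau> > 0" and dP: "det P \<noteq> 0" and dQ: "det Q \<noteq> 0"
    and dB: "det B \<noteq> 0" and d1: "\<And>i j. of_nat d1 * B$i$j \<in> \<int>"
    and d2: "\<And>i j. of_nat d2 * matrix_inv B$i$j \<in> \<int>"
    and rel: "int_ratmat Q = twisted_congr B (int_ratmat P)"
    and M: "M \<in> R_ring (mat_scal P \<tau>)"
  shows "scale_mat (of_nat (d1 * d2)) (conj_map B M) \<in> R_ring (mat_scal Q \<tau>)"
proof -
  have End: "M \<in> End_Z (mat_scal P \<tau>)" and cond: "adjoint_cond P M"
    using M Hmat_cond_iff[OF t dP] by (auto simp: R_ring_def)
  have "adjoint_cond Q (scale_mat (of_nat (d1 * d2)) (conj_map B M))"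
    by (intro adjoint_cond_scale adjoint_cond_conj_map[OF dB rel cond])
  then show ?thesis
    using End_Z_conj_map[OF dB d1 d2 rel End] Hmat_cond_iff[OF t dQ] unfolding R_ring_def by blast
qed

section \<open>Tensoring with S\<close>

lemma scale_mat_scale_mat: "scale_mat a (scale_mat b X) = scale_mat (a * b) X"
  by (simp add: scale_mat_def mat2_eq)

lemma scale_mat_one: "scale_mat 1 X = X"
  by (simp add: scale_mat_def mat2_eq)

lemma conj_map_scale: "conj_map B (scale_mat c M) = scale_mat c (conj_map B M)"
  unfolding conj_map_def scale_mat_eq by (simp only: matrix_mul_assoc mat2_comm[of _ "rat_cmat B"])

lemma tensorS_transfer:
  fixes F :: "complex^2^2 \<Rightarrow> complex^2^2"
  assumes hom: "\<And>n M. F (scale_mat (of_nat n) M) = scale_mat (of_nat n) (F M)"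
    and d: "d > 0" "S = SZ \<longrightarrow> d = 1"
    and XY: "\<And>M. M \<in> X \<Longrightarrow> scale_mat (of_nat d) (F M) \<in> Y"
    and M: "M \<in> tensorS S X"
  shows "F M \<in> tensorS S Y"
proof (cases S)
  case SZ
  then show ?thesis using M XY d by (simp add: tensorS_def scale_mat_one)
next
  case SQ
  then obtain n :: nat where n: "n > 0" "scale_mat (of_nat n) M \<in> X"
    using M by (auto simp: tensorS_def)
  have "scale_mat (of_nat (d * n)) (F M) \<in> Y"
    using XY[OF n(2)] by (simp add: hom scale_mat_scale_mat)
  then show ?thesis using SQ n d by (auto simp: tensorS_def intro!: exI[of _ "d * n"])
qed

lemma conj_map_into:
  fixes B :: "rat^2^2" and P Q :: "int^2^2"
  assumes GL: "B \<in> GL2 S" and rel: "int_ratmat Q = twisted_congr B (int_ratmat P)"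
    and dP: "det P \<noteq> 0" and dQ: "det Q \<noteq> 0" and t: "Im \<tau> > 0"
  shows "\<forall>M \<in> End_S S (mat_scal P \<tau>). conj_map B M \<in> End_S S (mat_scal Q \<tau>)"
    and "\<forall>M \<in> tensorS S (R_ring (mat_scal P \<tau>)). conj_map B M \<in> tensorS S (R_ring (mat_scal Q \<tau>))"
proof -
  have dB: "det B \<noteq> 0" using GL2_det[OF GL] .
  obtain d1 :: nat where d1: "d1 > 0" "S = SZ \<Longrightarrow> d1 = 1" "\<And>i j. of_nat d1 * B$i$j \<in> \<int>"
    using GL2_denom[OF GL] by metis
  obtain d2 :: nat
    where d2: "d2 > 0" "S = SZ \<Longrightarrow> d2 = 1" "\<And>i j. of_nat d2 * matrix_inv B$i$j \<in> \<int>"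
    using GL2_denom[OF GL2_inv[OF GL]] by metis
  have d: "d1 * d2 > 0" "S = SZ \<longrightarrow> d1 * d2 = 1" using d1 d2 by simp_all
  note transfer = tensorS_transfer[OF conj_map_scale d]
  show "\<forall>M \<in> End_S S (mat_scal P \<tau>). conj_map B M \<in> End_S S (mat_scal Q \<tau>)"
    unfolding End_S_def using transfer[OF End_Z_conj_map[OF dB d1(3) d2(3) rel]] by blast
  show "\<forall>M \<in> tensorS S (R_ring (mat_scal P \<tau>)). conj_map B M \<in> tensorS S (R_ring (mat_scal Q \<tau>))"
    using transfer[OF R_ring_conj_map[OF t dP dQ dB d1(3) d2(3) rel]] by blast
qed

lemma conj_map_S_alg_iso:
  fixes A :: "rat^2^2"
  assumes d: "det A \<noteq> 0"
    and XY: "\<forall>M \<in> X. conj_map A M \<in> Y"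
    and YX: "\<forall>M \<in> Y. conj_map (matrix_inv A) M \<in> X"
  shows "S_alg_iso S (conj_map A) X Y"
proof -
  let ?A = "rat_cmat A" and ?B = "rat_cmat (matrix_inv A)"
  have AB: "?A ** ?B = mat 1" "?B ** ?A = mat 1" using rat_cmat_inv[OF d] by auto
  have cancel: "?A ** (?B ** Z) = Z" "?B ** (?A ** Z) = Z" for Z :: "complex^2^2"
    by (simp_all add: matrix_mul_assoc AB)
  have inv: "conj_map (matrix_inv A) M = ?B ** M ** ?A" for M
    by (simp add: conj_map_def matrix_inv_inv[OF d])
  have bij: "bij_betw (conj_map A) X Y"
  proof (rule bij_betw_byWitness[where f' = "conj_map (matrix_inv A)"])
    show "\<forall>M \<in> X. conj_map (matrix_inv A) (conj_map A M) = M"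
         "\<forall>M \<in> Y. conj_map A (conj_map (matrix_inv A) M) = M"
      unfolding inv by (simp_all add: conj_map_def matrix_mul_assoc[symmetric] cancel AB)
  qed (use XY YX in auto)
  show ?thesis unfolding S_alg_iso_def
  proof (intro conjI ballI bij)
    show "conj_map A (mat 1) = mat 1" using AB by (simp add: conj_map_def)
  next
    fix x y
    show "conj_map A (x + y) = conj_map A x + conj_map A y"
      by (simp add: conj_map_def matrix_add_ldistrib matrix_add_rdistrib2)
    show "conj_map A (x ** y) = conj_map A x ** conj_map A y"
      by (simp add: conj_map_def matrix_mul_assoc[symmetric] cancel)
  next
    fix c x
    show "conj_map A (scale_mat (of_rat c) x) = scale_mat (of_rat c) (conj_map A x)"
      by (rule conj_map_scale)
  qed
qed

theorem mainTheorem9: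
  fixes N :: nat and \<tau> :: complex and Q1 Q2 :: "int^2^2"
    and S :: coeff_ring and A :: "rat^2^2"
  assumes "prime N"
    and "Im \<tau> > 0"
    and "sym_pos_def Q1" and "sym_pos_def Q2"
    and "det Q1 = int N" and "det Q2 = int N"
    and "A \<in> GL2 S"
    and "int_ratmat Q2 = (\<chi> i j. inverse (det A) * (A ** int_ratmat Q1 ** transpose A)$i$j)"
  shows "S_alg_iso S (\<lambda>M. rat_cmat A ** M ** rat_cmat (matrix_inv A))
           (End_S S (mat_scal Q1 \<tau>)) (End_S S (mat_scal Q2 \<tau>))
       \<and> S_alg_iso S (\<lambda>M. rat_cmat A ** M ** rat_cmat (matrix_inv A))
           (tensorS S (R_ring (mat_scal Q1 \<tau>))) (tensorS S (R_ring (mat_scal Q2 \<tau>)))"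
proof -
  have dQ1: "det Q1 \<noteq> 0" and dQ2: "det Q2 \<noteq> 0"
    using assms(1,5,6) by (auto simp: prime_gt_0_nat)
  have dA: "det A \<noteq> 0" using GL2_det[OF assms(7)] .
  have rel: "int_ratmat Q2 = twisted_congr A (int_ratmat Q1)"
    using assms(8) by (simp add: twisted_congr_def)
  have rel_inv: "int_ratmat Q1 = twisted_congr (matrix_inv A) (int_ratmat Q2)"
    using twisted_congr_inv[OF dA] rel by simp
  note forward = conj_map_into[OF assms(7) rel dQ1 dQ2 assms(2)]
  note backward = conj_map_into[OF GL2_inv[OF assms(7)] rel_inv dQ2 dQ1 assms(2)]
  have "S_alg_iso S (conj_map A) (End_S S (mat_scal Q1 \<tau>)) (End_S S (mat_scal Q2 \<tau>))
      \<and> S_alg_iso S (conj_map A)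
          (tensorS S (R_ring (mat_scal Q1 \<tau>))) (tensorS S (R_ring (mat_scal Q2 \<tau>)))"
    by (intro conjI conj_map_S_alg_iso[OF dA] forward backward)
  then show ?thesis unfolding conj_map_def[abs_def] .
qed

end
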